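(* Let $L_n$ and $PL_n$ be as in the context. Then (1) $PL_n$ is a subgroup of the commutator subgroup $L_n'$ for all $n\ge 2$; and (2) $PL_n$ is not a characteristic subgroup of $L_n$ for $n\ge 4$.
   Context: For $n\ge 2$, $L_n=\langle y_1,\dots,y_{n-1}\mid y_j^2=1\ (1\le j\le n-1),\ y_iy_{i+1}y_i=y_{i+1}y_iy_{i+1}\ (1\le i\le n-2)\rangle$ (no relations between $y_i,y_j$ with $|i-j|\ge 2$). Let $\pi:L_n\to S_n$ be the surjective homomorphism with $\pi(y_i)=(i\ i{+}1)$, the transposition, and $PL_n=\ker\pi$. *)

theory Defs
  imports "HOL-Algebra.Algebra"
begin

text \<open>Words in the generators y_1, ..., y_(n-1) are lists of indices in {1..<n}.
  Since every generator is an involution, no inverse letters are needed.\<close>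

definition words :: "nat \<Rightarrow> nat list set" where
  "words n = lists {1..<n}"

definition lstep :: "nat \<Rightarrow> nat list \<Rightarrow> nat list \<Rightarrow> bool" where
  "lstep n u v \<longleftrightarrow>
     (\<exists>a b i. 1 \<le> i \<and> i \<le> n - 1 \<and>
        ((u = a @ [i, i] @ b \<and> v = a @ b) \<or> (u = a @ b \<and> v = a @ [i, i] @ b)))
   \<or> (\<exists>a b i. 1 \<le> i \<and> i + 1 \<le> n - 1 \<and>
        ((u = a @ [i, i+1, i] @ b \<and> v = a @ [i+1, i, i+1] @ b) \<or>
         (u = a @ [i+1, i, i+1] @ b \<and> v = a @ [i, i+1, i] @ b)))"

definition lequiv :: "nat \<Rightarrow> (nat list \<times> nat list) set" where
  "lequiv n = {(u, v). u \<in> words n \<and> v \<in> words n \<and> (lstep n)\<^sup>*\<^sup>* u v}"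

definition L :: "nat \<Rightarrow> nat list set monoid" where
  "L n = \<lparr> carrier = words n // lequiv n,
           monoid.mult = (\<lambda>A B. lequiv n `` {(SOME a. a \<in> A) @ (SOME b. b \<in> B)}),
           one = lequiv n `` {[]} \<rparr>"

definition perm_of_word :: "nat list \<Rightarrow> nat \<Rightarrow> nat" where
  "perm_of_word w = foldr (\<lambda>i p. Transposition.transpose i (Suc i) \<circ> p) w id"

definition piL :: "nat \<Rightarrow> nat list set \<Rightarrow> nat \<Rightarrow> nat" where
  "piL n A = perm_of_word (SOME a. a \<in> A)"

definition PL :: "nat \<Rightarrow> nat list set set" where
  "PL n = kernel (L n) (sym_group n) (piL n)"

definition characteristic :: "'a set \<Rightarrow> ('a, 'b) monoid_scheme \<Rightarrow> bool" where
  "characteristic H G \<longleftrightarrow> subgroup H G \<and> (\<forall>\<phi> \<in> iso G G. \<phi> ` H = H)"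

end

theory Submission
  imports Defs
begin

(* Part (1): pi followed by the sign map sends every generator to an odd permutation, so every
   element of PL n is represented by a word of even length, i.e. a product of elements y_i y_j.
   These telescope into products of y_k y_(k+1) and their inverses, and each y_k y_(k+1) is a
   commutator: the braid relation gives y_k (y_k y_(k+1)) y_k (y_(k+1) y_k) = y_k y_(k+1).
   Part (2): the substitution y_1 |-> y_2 y_1 y_2, y_j |-> y_j (j >= 2) respects the defining
   relations for n >= 3 and is its own inverse, hence an automorphism of L n. It maps
   (y_1 y_3)^2, which lies in PL n, to y_2 y_1 y_2 y_3 y_2 y_1 y_2 y_3, whose image in S_n
   moves 4. *)

section \<open>Words modulo the defining relations\<close>

abbreviation lconv :: "nat \<Rightarrow> nat list \<Rightarrow> nat list \<Rightarrow> bool" where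
  "lconv n \<equiv> (lstep n)\<^sup>*\<^sup>*"

lemma lstep_sym: "lstep n u v \<Longrightarrow> lstep n v u"
  unfolding lstep_def by blast

lemma lconv_sym: "lconv n u v \<Longrightarrow> lconv n v u"
  using symp_rtranclp[of "lstep n"] by (metis lstep_sym sympD sympI)

lemma lstep_cases:
  assumes "lstep n u v"
  obtains (cancel) a b i where "1 \<le> i" "i < n" "u = a @ [i, i] @ b" "v = a @ b"
  | (uncancel) a b i where "1 \<le> i" "i < n" "u = a @ b" "v = a @ [i, i] @ b"
  | (braid) a b i where "1 \<le> i" "i + 1 < n" "u = a @ [i, i+1, i] @ b" "v = a @ [i+1, i, i+1] @ b"
  | (unbraid) a b i where "1 \<le> i" "i + 1 < n" "u = a @ [i+1, i, i+1] @ b" "v = a @ [i, i+1, i] @ b"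
  using assms unfolding lstep_def by (elim disjE exE conjE) auto

lemma lstep_append_context: "lstep n u v \<Longrightarrow> lstep n (x @ u @ y) (x @ v @ y)"
  unfolding lstep_def by (elim disjE exE conjE) (metis append_assoc)+

lemma lconv_append_context: "lconv n u v \<Longrightarrow> lconv n (x @ u @ y) (x @ v @ y)"
  by (induction rule: rtranclp_induct)
    (auto intro: rtranclp.rtrancl_into_rtrancl lstep_append_context)

lemma lconv_append: "lconv n u u' \<Longrightarrow> lconv n v v' \<Longrightarrow> lconv n (u @ v) (u' @ v')"
  using lconv_append_context[of n u u' "[]" v] lconv_append_context[of n v v' u' "[]"]
  by (simp add: rtranclp_trans)

lemma lconv_cancel: "1 \<le> i \<Longrightarrow> i < n \<Longrightarrow> lconv n (a @ [i, i] @ b) (a @ b)"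
  unfolding lstep_def by (intro r_into_rtranclp disjI1 exI[of _ a] exI[of _ b] exI[of _ i]) auto

lemma lconv_braid:
  "1 \<le> i \<Longrightarrow> i + 1 < n \<Longrightarrow> lconv n (a @ [i, i+1, i] @ b) (a @ [i+1, i, i+1] @ b)"
  unfolding lstep_def by (intro r_into_rtranclp disjI2 exI[of _ a] exI[of _ b] exI[of _ i]) auto

lemma words_append [simp]: "u @ v \<in> words n \<longleftrightarrow> u \<in> words n \<and> v \<in> words n"
  by (auto simp: words_def)

lemma words_Cons [simp]: "i # w \<in> words n \<longleftrightarrow> 1 \<le> i \<and> i < n \<and> w \<in> words n"
  by (auto simp: words_def)

lemma words_Nil [simp]: "[] \<in> words n"
  by (simp add: words_def)

lemma words_rev [simp]: "rev w \<in> words n \<longleftrightarrow> w \<in> words n"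
  by (auto simp: words_def)

lemma lconv_rev_append_self: "w \<in> words n \<Longrightarrow> lconv n (rev w @ w) []"
proof (induction w)
  case (Cons i w)
  then have "lconv n (rev w @ [i, i] @ w) (rev w @ w)"
    by (intro lconv_cancel) auto
  also have "lconv n \<dots> []"
    using Cons by simp
  finally show ?case
    by simp
qed simp

section \<open>The group structure of L n\<close>

definition cls :: "nat \<Rightarrow> nat list \<Rightarrow> nat list set" where
  "cls n w = lequiv n `` {w}"

definition rep :: "nat list set \<Rightarrow> nat list" where
  "rep A = (SOME a. a \<in> A)"

lemma equiv_lequiv: "equiv (words n) (lequiv n)"
  unfolding equiv_def refl_on_def sym_def trans_def lequiv_def
  by (auto intro: lconv_sym rtranclp_trans)

lemma cls_eqI: "u \<in> words n \<Longrightarrow> v \<in> words n \<Longrightarrow> lconv n u v \<Longrightarrow> cls n u = cls n v"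
  unfolding cls_def by (rule equiv_class_eq[OF equiv_lequiv]) (simp add: lequiv_def)

lemma carrier_L: "carrier (L n) = cls n ` words n"
  by (auto simp: L_def quotient_def cls_def)

lemma cls_in_carrier [simp]: "w \<in> words n \<Longrightarrow> cls n w \<in> carrier (L n)"
  by (simp add: carrier_L)

lemma carrier_LE:
  assumes "A \<in> carrier (L n)"
  obtains w where "w \<in> words n" "A = cls n w"
  using assms unfolding carrier_L by blast

lemma rep_cls:
  assumes "w \<in> words n"
  shows "rep (cls n w) \<in> words n" "lconv n (rep (cls n w)) w"
proof -
  have "rep (cls n w) \<in> cls n w"
    unfolding rep_def cls_def by (rule someI, rule equiv_class_self[OF equiv_lequiv assms])
  then show "rep (cls n w) \<in> words n" "lconv n (rep (cls n w)) w"
    by (auto simp: cls_def lequiv_def intro: lconv_sym)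
qed

lemma mult_cls:
  assumes "u \<in> words n" "v \<in> words n"
  shows "cls n u \<otimes>\<^bsub>L n\<^esub> cls n v = cls n (u @ v)"
proof -
  have "cls n u \<otimes>\<^bsub>L n\<^esub> cls n v = cls n (rep (cls n u) @ rep (cls n v))"
    by (simp add: L_def rep_def cls_def)
  also have "\<dots> = cls n (u @ v)"
    using rep_cls[OF assms(1)] rep_cls[OF assms(2)] assms
    by (intro cls_eqI) (simp_all add: lconv_append)
  finally show ?thesis .
qed

lemma one_L: "\<one>\<^bsub>L n\<^esub> = cls n []"
  by (simp add: L_def cls_def)

lemma mult_cls_rev:
  assumes "w \<in> words n"
  shows "cls n (rev w) \<otimes>\<^bsub>L n\<^esub> cls n w = \<one>\<^bsub>L n\<^esub>"
proof -
  have "cls n (rev w) \<otimes>\<^bsub>L n\<^esub> cls n w = cls n (rev w @ w)"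
    using assms by (simp add: mult_cls)
  also have "\<dots> = cls n []"
    using assms by (intro cls_eqI lconv_rev_append_self) simp_all
  finally show ?thesis
    by (simp add: one_L)
qed

lemma group_L: "group (L n)"
proof (rule groupI)
  fix A B assume "A \<in> carrier (L n)" "B \<in> carrier (L n)"
  then show "A \<otimes>\<^bsub>L n\<^esub> B \<in> carrier (L n)"
    by (elim carrier_LE) (simp add: mult_cls)
next
  fix A B C assume "A \<in> carrier (L n)" "B \<in> carrier (L n)" "C \<in> carrier (L n)"
  then show "A \<otimes>\<^bsub>L n\<^esub> B \<otimes>\<^bsub>L n\<^esub> C = A \<otimes>\<^bsub>L n\<^esub> (B \<otimes>\<^bsub>L n\<^esub> C)"
    by (elim carrier_LE) (simp add: mult_cls)
next
  fix A assume "A \<in> carrier (L n)"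
  then show "\<one>\<^bsub>L n\<^esub> \<otimes>\<^bsub>L n\<^esub> A = A"
    by (elim carrier_LE) (simp add: mult_cls one_L)
next
  fix A assume "A \<in> carrier (L n)"
  then show "\<exists>B\<in>carrier (L n). B \<otimes>\<^bsub>L n\<^esub> A = \<one>\<^bsub>L n\<^esub>"
    by (elim carrier_LE) (metis cls_in_carrier words_rev mult_cls_rev)
qed (simp add: one_L)

lemma inv_cls:
  assumes "w \<in> words n"
  shows "inv\<^bsub>L n\<^esub> (cls n w) = cls n (rev w)"
  using assms by (intro group.inv_equality[OF group_L] mult_cls_rev) simp_all

section \<open>The projection onto the symmetric group\<close>

lemma perm_of_word_simps [simp]:
  "perm_of_word [] = id"
  "perm_of_word (i # w) = Transposition.transpose i (Suc i) \<circ> perm_of_word w"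
  by (simp_all add: perm_of_word_def)

lemma perm_of_word_append [simp]: "perm_of_word (u @ v) = perm_of_word u \<circ> perm_of_word v"
  by (induction u) auto

lemma permutation_perm_of_word: "permutation (perm_of_word w)"
  by (induction w)
    (simp_all only: perm_of_word_simps permutation_id permutation_compose permutation_swap_id)

lemma evenperm_perm_of_word: "evenperm (perm_of_word w) \<longleftrightarrow> even (length w)"
proof (induction w)
  case (Cons i w)
  have "evenperm (perm_of_word (i # w)) \<longleftrightarrow>
      evenperm (Transposition.transpose i (Suc i)) = evenperm (perm_of_word w)"
    unfolding perm_of_word_simps
    by (rule evenperm_comp[OF permutation_swap_id permutation_perm_of_word])
  with Cons.IH show ?case
    by (simp add: evenperm_swap del: perm_of_word_simps)
qed simp

lemma perm_of_word_lconv: "lconv n u v \<Longrightarrow> perm_of_word u = perm_of_word v"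
proof (induction rule: rtranclp_induct)
  case (step v w)
  from \<open>lstep n v w\<close> have "perm_of_word v = perm_of_word w"
    unfolding lstep_def by (auto simp: fun_eq_iff transpose_def)
  with step.IH show ?case
    by simp
qed simp

lemma piL_cls: "w \<in> words n \<Longrightarrow> piL n (cls n w) = perm_of_word w"
  unfolding piL_def rep_def[symmetric] by (metis rep_cls(2) perm_of_word_lconv)

lemma cls_in_PL_iff: "w \<in> words n \<Longrightarrow> cls n w \<in> PL n \<longleftrightarrow> perm_of_word w = id"
  by (simp add: PL_def kernel_def sym_group_def piL_cls)

abbreviation commutator_subgroup :: "('a, 'b) monoid_scheme \<Rightarrow> 'a set" where
  "commutator_subgroup G \<equiv> derived G (carrier G)"

lemma (in group) commutator_in_commutator_subgroup:
  "g \<in> carrier G \<Longrightarrow> h \<in> carrier G \<Longrightarrow> g \<otimes> h \<otimes> inv g \<otimes> inv h \<in> commutator_subgroup G"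
  unfolding derived_def by (blast intro: generate.incl)

lemma subgroup_commutator_subgroup_L: "subgroup (commutator_subgroup (L n)) (L n)"
  by (simp add: group.derived_is_subgroup group_L)

lemma adjacent_pair_in_commutator_subgroup:
  assumes "1 \<le> i" "i + 1 < n"
  shows "cls n [i, i+1] \<in> commutator_subgroup (L n)"
proof -
  have words: "[i] \<in> words n" "[i, i+1] \<in> words n"
    using assms by auto
  have "lconv n [i, i, i+1, i, i+1, i] [i+1, i, i+1, i]"
    using lconv_cancel[of i n "[]" "[i+1, i, i+1, i]"] assms by simp
  also have "lconv n \<dots> [i, i+1, i, i]"
    using lconv_sym[OF lconv_braid[of i n "[]" "[i]"]] assms by simp
  also have "lconv n \<dots> [i, i+1]"
    using lconv_cancel[of i n "[i, i+1]" "[]"] assms by simp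
  finally have collapse: "lconv n [i, i, i+1, i, i+1, i] [i, i+1]" .
  have "cls n [i] \<otimes>\<^bsub>L n\<^esub> cls n [i, i+1] \<otimes>\<^bsub>L n\<^esub>
      inv\<^bsub>L n\<^esub> (cls n [i]) \<otimes>\<^bsub>L n\<^esub> inv\<^bsub>L n\<^esub> (cls n [i, i+1])
      = cls n [i, i, i+1, i, i+1, i]"
    using words by (simp add: mult_cls inv_cls)
  also have "\<dots> = cls n [i, i+1]"
    using collapse assms by (intro cls_eqI) auto
  finally show ?thesis
    using words by (metis cls_in_carrier group.commutator_in_commutator_subgroup[OF group_L])
qed

lemma cls_same_letter: "1 \<le> i \<Longrightarrow> i < n \<Longrightarrow> cls n [i, i] = \<one>\<^bsub>L n\<^esub>"
  unfolding one_L using lconv_cancel[of i n "[]" "[]"] by (intro cls_eqI) auto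

lemma mult_cls_telescope:
  assumes "i \<in> {1..<n}" "j \<in> {1..<n}" "k \<in> {1..<n}"
  shows "cls n [i, k] \<otimes>\<^bsub>L n\<^esub> cls n [k, j] = cls n [i, j]"
  using assms lconv_cancel[of k n "[i]" "[j]"] by (simp add: mult_cls) (intro cls_eqI; simp)

lemma pair_in_commutator_subgroup_ordered:
  assumes "1 \<le> i" "i \<le> j" "j < n"
  shows "cls n [i, j] \<in> commutator_subgroup (L n)"
  using assms(2)
proof (induction j rule: dec_induct)
  case base
  then show ?case
    using assms by (simp add: cls_same_letter subgroup.one_closed[OF subgroup_commutator_subgroup_L])
next
  case (step k)
  then have "cls n [i, Suc k] = cls n [i, k] \<otimes>\<^bsub>L n\<^esub> cls n [k, k+1]"
    using assms by (simp add: mult_cls_telescope)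
  then show ?case
    using step assms adjacent_pair_in_commutator_subgroup[of k n]
    by (simp add: subgroup.m_closed[OF subgroup_commutator_subgroup_L])
qed

lemma pair_in_commutator_subgroup:
  assumes "i \<in> {1..<n}" "j \<in> {1..<n}"
  shows "cls n [i, j] \<in> commutator_subgroup (L n)"
proof (cases "i \<le> j")
  case True
  then show ?thesis
    using assms by (simp add: pair_in_commutator_subgroup_ordered)
next
  case False
  then have "cls n [j, i] \<in> commutator_subgroup (L n)"
    using assms by (simp add: pair_in_commutator_subgroup_ordered)
  then have "inv\<^bsub>L n\<^esub> (cls n [j, i]) \<in> commutator_subgroup (L n)"
    by (rule subgroup.m_inv_closed[OF subgroup_commutator_subgroup_L])
  then show ?thesis
    using assms by (simp add: inv_cls)
qed

lemma even_word_in_commutator_subgroup: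
  "w \<in> words n \<Longrightarrow> even (length w) \<Longrightarrow> cls n w \<in> commutator_subgroup (L n)"
proof (induction w rule: induct_list012)
  case 1
  then show ?case
    by (metis one_L subgroup.one_closed subgroup_commutator_subgroup_L)
next
  case (3 i j w)
  then have "cls n (i # j # w) = cls n [i, j] \<otimes>\<^bsub>L n\<^esub> cls n w"
    by (simp add: mult_cls)
  then show ?case
    using 3 pair_in_commutator_subgroup[of i n j]
    by (simp add: subgroup.m_closed[OF subgroup_commutator_subgroup_L])
qed simp

lemma PL_subset_commutator_subgroup: "PL n \<subseteq> commutator_subgroup (L n)"
proof
  fix A assume "A \<in> PL n"
  moreover obtain w where w: "w \<in> words n" "A = cls n w"
    using \<open>A \<in> PL n\<close> by (auto simp: PL_def kernel_def elim: carrier_LE)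
  ultimately have "evenperm (perm_of_word w)"
    by (simp add: cls_in_PL_iff)
  with w show "A \<in> commutator_subgroup (L n)"
    by (simp add: evenperm_perm_of_word even_word_in_commutator_subgroup)
qed

section \<open>Endomorphisms induced by substitutions of words\<close>

definition relation_preserving :: "nat \<Rightarrow> (nat \<Rightarrow> nat list) \<Rightarrow> bool" where
  "relation_preserving n f \<longleftrightarrow>
     (\<forall>i \<in> {1..<n}. f i \<in> words n \<and> lconv n (f i @ f i) []) \<and>
     (\<forall>i. 1 \<le> i \<and> i + 1 < n \<longrightarrow> lconv n (f i @ f (i+1) @ f i) (f (i+1) @ f i @ f (i+1)))"

definition subst_map :: "nat \<Rightarrow> (nat \<Rightarrow> nat list) \<Rightarrow> nat list set \<Rightarrow> nat list set" where
  "subst_map n f A = cls n (concat (map f (rep A)))"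

lemma lconv_concat_map:
  assumes f: "relation_preserving n f" and "lconv n u v"
  shows "lconv n (concat (map f u)) (concat (map f v))"
  using assms(2)
proof (induction rule: rtranclp_induct)
  case (step v w)
  let ?F = "\<lambda>w. concat (map f w)"
  from step.hyps(2) have "lconv n (?F v) (?F w)"
  proof (cases rule: lstep_cases)
    case (cancel a b i)
    then show ?thesis
      using f lconv_append_context[of n "f i @ f i" "[]" "?F a" "?F b"]
      by (simp add: relation_preserving_def)
  next
    case (uncancel a b i)
    then show ?thesis
      using f lconv_sym[OF lconv_append_context[of n "f i @ f i" "[]" "?F a" "?F b"]]
      by (simp add: relation_preserving_def)
  next
    case (braid a b i)
    let ?r = "f i @ f (i+1) @ f i" and ?s = "f (i+1) @ f i @ f (i+1)"
    show ?thesis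
      using braid f lconv_append_context[of n ?r ?s "?F a" "?F b"]
      by (simp add: relation_preserving_def)
  next
    case (unbraid a b i)
    let ?r = "f i @ f (i+1) @ f i" and ?s = "f (i+1) @ f i @ f (i+1)"
    show ?thesis
      using unbraid f lconv_sym[OF lconv_append_context[of n ?r ?s "?F a" "?F b"]]
      by (simp add: relation_preserving_def)
  qed
  with step.IH show ?case
    by (rule rtranclp_trans)
qed simp

lemma concat_map_in_words:
  "relation_preserving n f \<Longrightarrow> w \<in> words n \<Longrightarrow> concat (map f w) \<in> words n"
  by (induction w) (auto simp: relation_preserving_def)

lemma subst_map_cls:
  assumes "relation_preserving n f" "w \<in> words n"
  shows "subst_map n f (cls n w) = cls n (concat (map f w))"
  unfolding subst_map_def using assms rep_cls[OF assms(2)]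
  by (intro cls_eqI concat_map_in_words lconv_concat_map)

lemma subst_map_hom:
  assumes "relation_preserving n f"
  shows "subst_map n f \<in> hom (L n) (L n)"
proof (rule homI)
  fix A assume "A \<in> carrier (L n)"
  then show "subst_map n f A \<in> carrier (L n)"
    using assms by (elim carrier_LE) (simp add: subst_map_cls concat_map_in_words)
next
  fix A B assume "A \<in> carrier (L n)" "B \<in> carrier (L n)"
  then show "subst_map n f (A \<otimes>\<^bsub>L n\<^esub> B) = subst_map n f A \<otimes>\<^bsub>L n\<^esub> subst_map n f B"
    using assms by (elim carrier_LE) (simp add: subst_map_cls concat_map_in_words mult_cls)
qed

lemma subst_map_iso:
  assumes f: "relation_preserving n f"
    and involutive: "\<And>i. i \<in> {1..<n} \<Longrightarrow> lconv n (concat (map f (f i))) [i]"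
  shows "subst_map n f \<in> iso (L n) (L n)"
proof -
  let ?F = "\<lambda>w. concat (map f w)"
  have twice: "lconv n (?F (?F w)) w" if "w \<in> words n" for w
    using that
  proof (induction w)
    case (Cons i w)
    then have "lconv n (?F (f i) @ ?F (?F w)) ([i] @ w)"
      by (intro lconv_append involutive) simp_all
    then show ?case
      by simp
  qed simp
  have "subst_map n f (subst_map n f A) = A" if A: "A \<in> carrier (L n)" for A
  proof -
    obtain w where w: "w \<in> words n" "A = cls n w"
      using A by (rule carrier_LE)
    then have "subst_map n f (subst_map n f A) = cls n (?F (?F w))"
      using f by (simp add: subst_map_cls concat_map_in_words)
    also have "\<dots> = A"
      using w f by (simp only:) (intro cls_eqI twice concat_map_in_words)
    finally show ?thesis .
  qed
  moreover have "subst_map n f A \<in> carrier (L n)" if "A \<in> carrier (L n)" for A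
    using that subst_map_hom[OF f] by (simp add: hom_def Pi_iff)
  ultimately show ?thesis
    by (intro isoI subst_map_hom[OF f] bij_betw_byWitness[where f' = "subst_map n f"]) auto
qed

definition flip_letter :: "nat \<Rightarrow> nat list" where
  "flip_letter i = (if i = 1 then [2, 1, 2] else [i])"

lemma lconv_double_conjugation:
  assumes "3 \<le> n"
  shows "lconv n [2, 2, 1, 2, 2] [1]"
proof -
  have "lconv n [2, 2, 1, 2, 2] [1, 2, 2]"
    using lconv_cancel[of 2 n "[]" "[1, 2, 2]"] assms by simp
  also have "lconv n \<dots> [1]"
    using lconv_cancel[of 2 n "[1]" "[]"] assms by simp
  finally show ?thesis .
qed

lemma relation_preserving_flip_letter:
  assumes "3 \<le> n"
  shows "relation_preserving n flip_letter"
  unfolding relation_preserving_def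
proof (intro conjI ballI allI impI)
  fix i assume i: "i \<in> {1..<n}"
  then show "flip_letter i \<in> words n"
    using assms by (auto simp: flip_letter_def)
  show "lconv n (flip_letter i @ flip_letter i) []"
  proof (cases "i = 1")
    case True
    have "lconv n [2, 1, 2, 2, 1, 2] [2, 1, 1, 2]"
      using lconv_cancel[of 2 n "[2, 1]" "[1, 2]"] assms by simp
    also have "lconv n \<dots> [2, 2]"
      using lconv_cancel[of 1 n "[2]" "[2]"] assms by simp
    also have "lconv n \<dots> []"
      using lconv_cancel[of 2 n "[]" "[]"] assms by simp
    finally show ?thesis
      using True by (simp add: flip_letter_def)
  next
    case False
    then show ?thesis
      using i lconv_cancel[of i n "[]" "[]"] by (simp add: flip_letter_def)
  qed
next
  fix i assume i: "1 \<le> i \<and> i + 1 < n"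
  show "lconv n (flip_letter i @ flip_letter (i+1) @ flip_letter i)
      (flip_letter (i+1) @ flip_letter i @ flip_letter (i+1))"
  proof (cases "i = 1")
    case True
    have "lconv n [2, 1, 2, 2, 2, 1, 2] [2, 1, 2, 1, 2]"
      using lconv_cancel[of 2 n "[2, 1]" "[2, 1, 2]"] assms by simp
    also have "lconv n \<dots> [1, 2, 1, 1, 2]"
      using lconv_sym[OF lconv_braid[of 1 n "[]" "[1, 2]"]] assms by (simp add: numeral_2_eq_2)
    also have "lconv n \<dots> [1, 2, 2]"
      using lconv_cancel[of 1 n "[1, 2]" "[2]"] assms by simp
    also have "lconv n \<dots> [1]"
      using lconv_cancel[of 2 n "[1]" "[]"] assms by simp
    also have "lconv n \<dots> [2, 2, 1, 2, 2]"
      using lconv_sym[OF lconv_double_conjugation] assms .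
    finally show ?thesis
      using True by (simp add: flip_letter_def numeral_2_eq_2)
  next
    case False
    then show ?thesis
      using i lconv_braid[of i n "[]" "[]"] by (simp add: flip_letter_def)
  qed
qed

lemma flip_letter_iso:
  assumes "3 \<le> n"
  shows "subst_map n flip_letter \<in> iso (L n) (L n)"
proof (rule subst_map_iso[OF relation_preserving_flip_letter[OF assms]])
  fix i assume "i \<in> {1..<n}"
  then show "lconv n (concat (map flip_letter (flip_letter i))) [i]"
    using lconv_double_conjugation[OF assms] by (auto simp: flip_letter_def)
qed

lemma PL_not_characteristic:
  assumes "4 \<le> n"
  shows "\<not> characteristic (PL n) (L n)"
proof
  assume "characteristic (PL n) (L n)"
  then have invariant: "subst_map n flip_letter ` PL n = PL n"
    using flip_letter_iso assms unfolding characteristic_def by auto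
  have words: "[1, 3, 1, 3] \<in> words n"
    using assms by simp
  then have "cls n [1, 3, 1, 3] \<in> PL n"
    by (simp add: cls_in_PL_iff fun_eq_iff transpose_def)
  then have "subst_map n flip_letter (cls n [1, 3, 1, 3]) \<in> PL n"
    using invariant by blast
  then have "cls n [2, 1, 2, 3, 2, 1, 2, 3] \<in> PL n"
    using words assms relation_preserving_flip_letter[of n]
    by (simp add: subst_map_cls flip_letter_def)
  then have "perm_of_word [2, 1, 2, 3, 2, 1, 2, 3] = id"
    using assms by (simp add: cls_in_PL_iff)
  then have "perm_of_word [2, 1, 2, 3, 2, 1, 2, 3] 4 = 4"
    by simp
  then show False
    by (simp add: transpose_def)
qed

theorem proposition5p1:
  shows "(\<forall>n::nat. n \<ge> 2 \<longrightarrow> PL n \<subseteq> derived (L n) (carrier (L n)))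
       \<and> (\<forall>n::nat. n \<ge> 4 \<longrightarrow> \<not> characteristic (PL n) (L n))"
  using PL_subset_commutator_subgroup PL_not_characteristic by blast

end
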